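(* Let $S_i>0$, and let $u_{\min}<0<u_{\max}$ and $0<v_{\min}\le v_{\max}$ be constants. Let $v_i^0$ satisfy $v_{\min}\le v_i^0\le v_{\max}$. For $t_i^f>0$ define $$b_i=\frac{3(S_i-v_i^0t_i^f)}{2(t_i^f)^2},\qquad a_i=-\frac{b_i}{3t_i^f},$$ and the trajectory $p_i(t)=a_it^3+b_it^2+v_i^0t$, $v_i(t)=3a_it^2+2b_it+v_i^0$, $u_i(t)=6a_it+2b_i$ for $t\in[0,t_i^f]$ (so that $p_i(0)=0$, $v_i(0)=v_i^0$, $p_i(t_i^f)=S_i$, $u_i(t_i^f)=0$). Call $t_i^f$ feasible if $u_{\min}\le u_i(t)\le u_{\max}$ and $v_{\min}\le v_i(t)\le v_{\max}$ for all $t\in[0,t_i^f]$. Define $$t_{i,v_{\min}}^f=\frac{3S_i}{v_i^0+2v_{\min}},\qquad t_{i,u_{\min}}^f=\frac{\sqrt{9(v_i^0)^2+12S_iu_{\min}}-3v_i^0}{2u_{\min}}\ \ (\text{when } 9(v_i^0)^2+12S_iu_{\min}\ge 0),$$ and $$t_{i,\max}^f=\begin{cases} t_{i,v_{\min}}^f, & \text{if } 9(v_i^0)^2+12S_iu_{\min}<0,\\ \max\{t_{i,u_{\min}}^f,\,t_{i,v_{\min}}^f\}, & \text{otherwise.}\end{cases}$$ Then $t_{i,\max}^f$ is an upper bound on the exit time imposed by the speed and control constraints: every feasible $t_i^f$ satisfies $t_i^f\le t_{i,\max}^f$.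
   Context: This is the unconstrained energy-optimal (cubic-position) trajectory for a double-integrator vehicle $\dot p_i=v_i$, $\dot v_i=u_i$ traveling a distance $S_i$ starting at time $0$ from position $0$ with speed $v_i^0$, with exit time $t_i^f$ and terminal condition $u_i(t_i^f)=0$. The speed and control constraints are $u_{\min}\le u_i(t)\le u_{\max}$ and $0<v_{\min}\le v_i(t)\le v_{\max}$. *)

theory Defs
  imports Complex_Main
begin

definition b_coef :: "real \<Rightarrow> real \<Rightarrow> real \<Rightarrow> real" where
  "b_coef S v0 tf = 3 * (S - v0 * tf) / (2 * tf ^ 2)"

definition a_coef :: "real \<Rightarrow> real \<Rightarrow> real \<Rightarrow> real" where
  "a_coef S v0 tf = - b_coef S v0 tf / (3 * tf)"

definition pos_traj :: "real \<Rightarrow> real \<Rightarrow> real \<Rightarrow> real \<Rightarrow> real" where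
  "pos_traj S v0 tf t = a_coef S v0 tf * t ^ 3 + b_coef S v0 tf * t ^ 2 + v0 * t"

definition vel_traj :: "real \<Rightarrow> real \<Rightarrow> real \<Rightarrow> real \<Rightarrow> real" where
  "vel_traj S v0 tf t = 3 * a_coef S v0 tf * t ^ 2 + 2 * b_coef S v0 tf * t + v0"

definition ctrl_traj :: "real \<Rightarrow> real \<Rightarrow> real \<Rightarrow> real \<Rightarrow> real" where
  "ctrl_traj S v0 tf t = 6 * a_coef S v0 tf * t + 2 * b_coef S v0 tf"

definition feasible_exit ::
  "real \<Rightarrow> real \<Rightarrow> real \<Rightarrow> real \<Rightarrow> real \<Rightarrow> real \<Rightarrow> real \<Rightarrow> bool" where
  "feasible_exit umin umax vmin vmax S v0 tf \<longleftrightarrow>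
     (\<forall>t\<in>{0..tf}. umin \<le> ctrl_traj S v0 tf t \<and> ctrl_traj S v0 tf t \<le> umax
                 \<and> vmin \<le> vel_traj S v0 tf t \<and> vel_traj S v0 tf t \<le> vmax)"

definition tf_vmin :: "real \<Rightarrow> real \<Rightarrow> real \<Rightarrow> real" where
  "tf_vmin vmin S v0 = 3 * S / (v0 + 2 * vmin)"

definition tf_umin :: "real \<Rightarrow> real \<Rightarrow> real \<Rightarrow> real" where
  "tf_umin umin S v0 = (sqrt (9 * v0 ^ 2 + 12 * S * umin) - 3 * v0) / (2 * umin)"

definition tf_max :: "real \<Rightarrow> real \<Rightarrow> real \<Rightarrow> real \<Rightarrow> real" where
  "tf_max umin vmin S v0 =
     (if 9 * v0 ^ 2 + 12 * S * umin < 0 then tf_vmin vmin S v0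
      else max (tf_umin umin S v0) (tf_vmin vmin S v0))"

end

theory Submission
  imports Defs
begin

(* Only the terminal speed constraint is needed: the exit speed 3 S / (2 tf) - v0 / 2 decreases
   in tf, so v(tf) \<ge> vmin is equivalent to tf \<le> tf_vmin, and tf_max never falls below tf_vmin. *)

lemma vel_traj_at_exit:
  assumes "tf \<noteq> 0"
  shows "vel_traj S v0 tf tf = 3 * S / (2 * tf) - v0 / 2"
  using assms unfolding vel_traj_def a_coef_def b_coef_def
  by (simp add: field_simps power2_eq_square power3_eq_cube)

lemma exit_speed_ge_iff_le_tf_vmin:
  assumes "tf > 0" and "v0 + 2 * vmin > 0"
  shows "vmin \<le> vel_traj S v0 tf tf \<longleftrightarrow> tf \<le> tf_vmin vmin S v0"
proof -
  have "vmin \<le> vel_traj S v0 tf tf \<longleftrightarrow> tf * (v0 + 2 * vmin) \<le> 3 * S"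
    using assms(1) by (simp add: vel_traj_at_exit field_simps)
  also have "\<dots> \<longleftrightarrow> tf \<le> tf_vmin vmin S v0"
    using assms(2) unfolding tf_vmin_def by (simp add: pos_le_divide_eq)
  finally show ?thesis .
qed

lemma tf_vmin_le_tf_max: "tf_vmin vmin S v0 \<le> tf_max umin vmin S v0"
  unfolding tf_max_def by simp

theorem proposition2:
  fixes S v0 umin umax vmin vmax tf :: real
  assumes "S > 0"
    and "umin < 0" and "0 < umax"
    and "0 < vmin" and "vmin \<le> vmax"
    and "vmin \<le> v0" and "v0 \<le> vmax"
    and "tf > 0"
    and "feasible_exit umin umax vmin vmax S v0 tf"
  shows "tf \<le> tf_max umin vmin S v0"
proof -
  have "vmin \<le> vel_traj S v0 tf tf"
    using assms(8,9) unfolding feasible_exit_def by simp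
  moreover have "v0 + 2 * vmin > 0"
    using assms(4,6) by simp
  ultimately have "tf \<le> tf_vmin vmin S v0"
    using assms(8) exit_speed_ge_iff_le_tf_vmin by blast
  then show ?thesis
    using tf_vmin_le_tf_max order_trans by blast
qed

end
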